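(* Let $0\le\alpha<1$, let $n$ and $k$ be integers with $2\le k\le n-3$, and let $G=\overline{P_k\cup C_{n-k}}$. Then (a) if $k$ is even, $\lambda_1(A_\alpha(\overline{P_n}))>\lambda_1(A_\alpha(G))$; (b) if $k$ is odd, $\lambda_1(A_\alpha(\overline{P_n}))<\lambda_1(A_\alpha(G))$.
   Context: All graphs are finite, simple and undirected. For a graph $G$, $A(G)$ is its adjacency matrix, $D(G)$ its diagonal degree matrix, and $A_\alpha(G)=\alpha D(G)+(1-\alpha)A(G)$. $\lambda_1(M)$ denotes the largest eigenvalue of a real symmetric matrix $M$. $P_k$ is the path and $C_k$ the cycle on $k$ vertices, $\cup$ is disjoint union and $\overline{G}$ the complement of $G$. *)

theory Defs
  imports Main "Jordan_Normal_Form.Char_Poly"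
begin

text \<open>A simple graph on vertex set {0..<n} is given by a symmetric irreflexive
  adjacency predicate E (only its restriction to {0..<n} matters).\<close>

definition path_graph :: "nat \<Rightarrow> nat \<Rightarrow> bool" where
  "path_graph i j \<longleftrightarrow> i + 1 = j \<or> j + 1 = i"

definition cycle_graph :: "nat \<Rightarrow> nat \<Rightarrow> nat \<Rightarrow> bool" where
  "cycle_graph m i j \<longleftrightarrow> i < m \<and> j < m \<and> i \<noteq> j \<and> ((i + 1) mod m = j \<or> (j + 1) mod m = i)"

definition path_cycle_union :: "nat \<Rightarrow> nat \<Rightarrow> nat \<Rightarrow> nat \<Rightarrow> bool" where
  "path_cycle_union k n i j \<longleftrightarrow>
     (i < k \<and> j < k \<and> path_graph i j) \<or>
     (k \<le> i \<and> k \<le> j \<and> i < n \<and> j < n \<and> cycle_graph (n - k) (i - k) (j - k))"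

definition complement_graph :: "(nat \<Rightarrow> nat \<Rightarrow> bool) \<Rightarrow> nat \<Rightarrow> nat \<Rightarrow> bool" where
  "complement_graph E i j \<longleftrightarrow> i \<noteq> j \<and> \<not> E i j"

definition adj_mat :: "nat \<Rightarrow> (nat \<Rightarrow> nat \<Rightarrow> bool) \<Rightarrow> real mat" where
  "adj_mat n E = mat n n (\<lambda>(i, j). if E i j then 1 else 0)"

definition deg_mat :: "nat \<Rightarrow> (nat \<Rightarrow> nat \<Rightarrow> bool) \<Rightarrow> real mat" where
  "deg_mat n E = mat n n (\<lambda>(i, j). if i = j then real (card {l. l < n \<and> E i l}) else 0)"

definition A_alpha :: "real \<Rightarrow> nat \<Rightarrow> (nat \<Rightarrow> nat \<Rightarrow> bool) \<Rightarrow> real mat" where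
  "A_alpha \<alpha> n E = \<alpha> \<cdot>\<^sub>m deg_mat n E + (1 - \<alpha>) \<cdot>\<^sub>m adj_mat n E"

definition lambda1 :: "real mat \<Rightarrow> real" where
  "lambda1 M = Max {x. eigenvalue M x}"

end

theory Submission
  imports Defs "Jordan_Normal_Form.Spectral_Radius"
begin

text \<open>For \<open>q > 0\<close> put \<open>\<rho> = (1 - \<alpha>)(q + 1/q) - 2\<alpha>\<close> and \<open>\<lambda> = \<rho> + \<alpha>(n - 1) - (1 - \<alpha>)\<close>.
  If z solves \<open>(A\<^sub>\<alpha>(H) + \<rho> I) z = (\<rho> + 2) \<one>\<close>, then
  \<open>A\<^sub>\<alpha>(H\<^sup>c) z = \<lambda> z + (1 - \<alpha>)(\<Sum> z - (1 + q)\<^sup>2 / q) \<one>\<close>. For \<open>P\<^sub>n\<close> and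
  \<open>P\<^sub>k \<union> C\<^bsub>n - k\<^esub>\<close> such a z is explicit: a combination of \<open>(-q)\<^sup>i\<close> and \<open>(-q)\<^bsup>p - 1 - i\<^esup>\<close>
  on the path, and 1 on the cycle. Choosing q so that \<open>\<Sum> z = (1 + q)\<^sup>2 / q\<close> for one of
  the two graphs makes \<open>\<lambda>(q)\<close> an eigenvalue of its complement. For the same q the vector of the
  other graph is positive with \<open>\<Sum> z < (1 + q)\<^sup>2 / q\<close>, so by a Collatz--Wielandt argument every
  eigenvalue of the other complement lies below \<open>\<lambda>(q)\<close>. Which graph plays which role is decided
  by the sign of \<open>(-q)\<^sup>k\<close>, i.e. by the parity of k.\<close>

lemma finite_eigenvalues:
  assumes "(M :: real mat) \<in> carrier_mat n n"
  shows "finite {x. eigenvalue M x}"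
  using card_finite_spectrum[OF assms] unfolding spectrum_def by simp

lemma eigenvalue_le_lambda1:
  assumes "(M :: real mat) \<in> carrier_mat n n" "eigenvalue M x"
  shows "x \<le> lambda1 M"
  unfolding lambda1_def using finite_eigenvalues[OF assms(1)] assms(2) by (intro Max_ge) auto

lemma lambda1_less:
  assumes "(M :: real mat) \<in> carrier_mat n n" "eigenvalue M x"
    and "\<And>\<mu>. eigenvalue M \<mu> \<Longrightarrow> \<mu> < c"
  shows "lambda1 M < c"
proof -
  have "eigenvalue M (lambda1 M)" unfolding lambda1_def
    using finite_eigenvalues[OF assms(1)] assms(2) Max_in[of "{x. eigenvalue M x}"] by auto
  then show ?thesis by (rule assms(3))
qed

lemma mult_mat_vec_sum:
  assumes "(M :: real mat) \<in> carrier_mat n n" "v \<in> carrier_vec n" "i < n"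
  shows "(M *\<^sub>v v) $ i = (\<Sum>j<n. M $$ (i, j) * v $ j)"
  using assms by (auto simp: scalar_prod_def row_def lessThan_atLeast0 intro!: sum.cong)

lemma abs_eigenvector_subinvariant:
  fixes M :: "real mat"
  assumes M: "M \<in> carrier_mat n n" and nonneg: "\<And>i j. i < n \<Longrightarrow> j < n \<Longrightarrow> 0 \<le> M $$ (i, j)"
    and v: "v \<in> carrier_vec n" "M *\<^sub>v v = \<mu> \<cdot>\<^sub>v v" and i: "i < n"
  shows "\<bar>\<mu>\<bar> * \<bar>v $ i\<bar> \<le> (\<Sum>j<n. M $$ (i, j) * \<bar>v $ j\<bar>)"
proof -
  have "\<mu> * v $ i = (\<Sum>j<n. M $$ (i, j) * v $ j)"
    using v mult_mat_vec_sum[OF M v(1) i] i by simp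
  then have "\<bar>\<mu>\<bar> * \<bar>v $ i\<bar> = \<bar>\<Sum>j<n. M $$ (i, j) * v $ j\<bar>" by (metis abs_mult)
  also have "\<dots> \<le> (\<Sum>j<n. \<bar>M $$ (i, j) * v $ j\<bar>)" by (rule sum_abs)
  also have "\<dots> = (\<Sum>j<n. M $$ (i, j) * \<bar>v $ j\<bar>)"
    by (rule sum.cong) (auto simp: abs_mult nonneg i)
  finally show ?thesis .
qed

text \<open>A Collatz--Wielandt type bound: weighting the rows by the positive vector z and using the
  symmetry of M moves M from the eigenvector onto z.\<close>

lemma eigenvalue_less_if_strictly_subinvariant:
  fixes M :: "real mat"
  assumes M: "M \<in> carrier_mat n n"
    and nonneg: "\<And>i j. i < n \<Longrightarrow> j < n \<Longrightarrow> 0 \<le> M $$ (i, j)"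
    and sym: "\<And>i j. i < n \<Longrightarrow> j < n \<Longrightarrow> M $$ (i, j) = M $$ (j, i)"
    and pos: "\<And>i. i < n \<Longrightarrow> 0 < z i"
    and sub: "\<And>i. i < n \<Longrightarrow> (\<Sum>j<n. M $$ (i, j) * z j) < r * z i"
    and ev: "eigenvalue M \<mu>"
  shows "\<mu> < r"
proof -
  obtain v where v: "v \<in> carrier_vec n" "v \<noteq> 0\<^sub>v n" "M *\<^sub>v v = \<mu> \<cdot>\<^sub>v v"
    using ev M unfolding eigenvalue_def eigenvector_def by auto
  obtain i0 where i0: "i0 < n" "v $ i0 \<noteq> 0"
    using v(1,2) by (metis carrier_vecD eq_vecI index_zero_vec)
  define S where "S = (\<Sum>i<n. z i * \<bar>v $ i\<bar>)"
  have "0 < S" unfolding S_def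
    by (rule sum_pos2[of _ i0]) (use i0 pos in \<open>auto simp: less_imp_le\<close>)
  have "\<bar>\<mu>\<bar> * S = (\<Sum>i<n. z i * (\<bar>\<mu>\<bar> * \<bar>v $ i\<bar>))"
    unfolding S_def by (simp add: sum_distrib_left algebra_simps)
  also have "\<dots> \<le> (\<Sum>i<n. z i * (\<Sum>j<n. M $$ (i, j) * \<bar>v $ j\<bar>))"
    using abs_eigenvector_subinvariant[OF M nonneg v(1,3)] pos
    by (intro sum_mono mult_left_mono) (auto intro: less_imp_le)
  also have "\<dots> = (\<Sum>j<n. \<bar>v $ j\<bar> * (\<Sum>i<n. M $$ (j, i) * z i))"
    by (auto simp: sum_distrib_left sym algebra_simps intro: sum.swap[THEN trans] sum.cong)
  also have "\<dots> < (\<Sum>j<n. \<bar>v $ j\<bar> * (r * z j))"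
  proof (rule sum_strict_mono_ex1)
    show "\<forall>j\<in>{..<n}. \<bar>v $ j\<bar> * (\<Sum>i<n. M $$ (j, i) * z i) \<le> \<bar>v $ j\<bar> * (r * z j)"
      using sub by (simp add: mult_left_mono less_imp_le)
    show "\<exists>j\<in>{..<n}. \<bar>v $ j\<bar> * (\<Sum>i<n. M $$ (j, i) * z i) < \<bar>v $ j\<bar> * (r * z j)"
      using sub[OF i0(1)] i0 by (intro bexI[of _ i0]) auto
  qed simp
  also have "\<dots> = r * S" unfolding S_def by (simp add: sum_distrib_left algebra_simps)
  finally show ?thesis using \<open>0 < S\<close> by simp
qed

section \<open>The \<open>A\<^sub>\<alpha>\<close>-matrix of a complement\<close>

abbreviation neighbours :: "nat \<Rightarrow> (nat \<Rightarrow> nat \<Rightarrow> bool) \<Rightarrow> nat \<Rightarrow> nat set" where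
  "neighbours n E i \<equiv> {j. j < n \<and> E i j}"

lemma A_alpha_carrier: "A_alpha a n E \<in> carrier_mat n n"
  unfolding A_alpha_def deg_mat_def adj_mat_def by simp

lemma A_alpha_entry:
  assumes "i < n" "j < n"
  shows "A_alpha a n E $$ (i, j) =
    (if i = j then a * real (card (neighbours n E i)) else 0) + (if E i j then 1 - a else 0)"
  using assms unfolding A_alpha_def deg_mat_def adj_mat_def by simp

lemma A_alpha_row_sum:
  assumes "i < n"
  shows "(\<Sum>j<n. A_alpha a n E $$ (i, j) * z j) =
    a * real (card (neighbours n E i)) * z i + (1 - a) * (\<Sum>j\<in>neighbours n E i. z j)"
proof -
  have "(\<Sum>j<n. A_alpha a n E $$ (i, j) * z j) =
      (\<Sum>j<n. (if i = j then a * real (card (neighbours n E i)) * z j else 0)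
        + (1 - a) * (if E i j then z j else 0))"
    using assms by (intro sum.cong) (auto simp: A_alpha_entry algebra_simps)
  also have "\<dots> = a * real (card (neighbours n E i)) * z i + (1 - a) * (\<Sum>j<n. if E i j then z j else 0)"
    using assms by (simp add: sum.distrib sum_distrib_left)
  also have "(\<Sum>j<n. if E i j then z j else 0) = (\<Sum>j\<in>neighbours n E i. z j)"
    by (simp add: sum.inter_filter[symmetric] lessThan_def Collect_conj_eq Int_commute)
  finally show ?thesis using assms by simp
qed

lemma card_neighbours_complement:
  assumes "i < n" "\<not> H i i"
  shows "card (neighbours n (complement_graph H) i) + card (neighbours n H i) = n - 1"
proof -
  have "neighbours n (complement_graph H) i \<union> neighbours n H i = {..<n} - {i}"
    "neighbours n (complement_graph H) i \<inter> neighbours n H i = {}"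
    using assms unfolding complement_graph_def by auto
  then have "card (neighbours n (complement_graph H) i) + card (neighbours n H i) = card ({..<n} - {i})"
    by (metis card_Un_disjoint finite_Collect_conjI finite_Collect_less_nat)
  then show ?thesis using assms(1) by simp
qed

lemma A_alpha_complement_entry:
  assumes "i < n" "j < n" "\<not> H i i"
  shows "A_alpha a n (complement_graph H) $$ (i, j) =
    (if i = j then a * (real n - 1) - (1 - a) else 0) + (1 - a) - A_alpha a n H $$ (i, j)"
proof (cases "i = j")
  case True
  have "real (card (neighbours n (complement_graph H) i)) = real n - 1 - real (card (neighbours n H i))"
    using card_neighbours_complement[of i n H] assms by linarith
  then have "a * real (card (neighbours n (complement_graph H) i)) =
      a * (real n - 1) - a * real (card (neighbours n H i))"
    by (simp add: right_diff_distrib)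
  moreover have "\<not> complement_graph H i i" unfolding complement_graph_def by simp
  ultimately show ?thesis
    using True assms by (simp add: A_alpha_entry)
next
  case False
  then show ?thesis using assms by (simp add: A_alpha_entry complement_graph_def)
qed

lemma A_alpha_complement_row_sum:
  assumes "i < n" "\<not> H i i"
  shows "(\<Sum>j<n. A_alpha a n (complement_graph H) $$ (i, j) * z j) =
    (a * (real n - 1) - (1 - a)) * z i + (1 - a) * (\<Sum>j<n. z j) - (\<Sum>j<n. A_alpha a n H $$ (i, j) * z j)"
proof -
  have "(\<Sum>j<n. A_alpha a n (complement_graph H) $$ (i, j) * z j) =
      (\<Sum>j<n. (if i = j then (a * (real n - 1) - (1 - a)) * z j else 0)
        + (1 - a) * z j - A_alpha a n H $$ (i, j) * z j)"
    using assms by (intro sum.cong) (auto simp: A_alpha_complement_entry algebra_simps)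
  also have "\<dots> = (a * (real n - 1) - (1 - a)) * z i + (1 - a) * (\<Sum>j<n. z j)
      - (\<Sum>j<n. A_alpha a n H $$ (i, j) * z j)"
    using assms by (simp add: sum.distrib sum_subtractf sum_distrib_left)
  finally show ?thesis .
qed

definition rho :: "real \<Rightarrow> real \<Rightarrow> real" where
  "rho a q = (1 - a) * (q + 1 / q) - 2 * a"

definition lam :: "real \<Rightarrow> nat \<Rightarrow> real \<Rightarrow> real" where
  "lam a n q = rho a q + a * (real n - 1) - (1 - a)"

lemma rho_add_two: "q \<noteq> 0 \<Longrightarrow> rho a q + 2 = (1 - a) * ((1 + q)^2 / q)"
  unfolding rho_def by (simp add: field_simps power2_eq_square)

lemma A_alpha_complement_row_sum_shifted:
  assumes "i < n" "\<not> H i i" "q \<noteq> 0"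
    and "(\<Sum>j<n. A_alpha a n H $$ (i, j) * z j) + rho a q * z i = rho a q + 2"
  shows "(\<Sum>j<n. A_alpha a n (complement_graph H) $$ (i, j) * z j) =
    lam a n q * z i + (1 - a) * ((\<Sum>j<n. z j) - (1 + q)^2 / q)"
proof -
  have "(\<Sum>j<n. A_alpha a n H $$ (i, j) * z j) = rho a q + 2 - rho a q * z i"
    using assms(4) by simp
  then show ?thesis
    using A_alpha_complement_row_sum[of i n H a z] assms rho_add_two[OF assms(3), of a]
    by (simp add: lam_def algebra_simps)
qed

lemma eigenvalue_A_alpha_complement:
  assumes q: "0 < q" and irrefl: "\<And>i. i < n \<Longrightarrow> \<not> H i i"
    and shifted: "\<And>i. i < n \<Longrightarrow> (\<Sum>j<n. A_alpha a n H $$ (i, j) * z j) + rho a q * z i = rho a q + 2"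
    and sum: "(\<Sum>j<n. z j) = (1 + q)^2 / q"
  shows "eigenvalue (A_alpha a n (complement_graph H)) (lam a n q)"
proof -
  let ?M = "A_alpha a n (complement_graph H)"
  have "?M *\<^sub>v vec n z = lam a n q \<cdot>\<^sub>v vec n z"
  proof (rule eq_vecI)
    fix i assume "i < dim_vec (lam a n q \<cdot>\<^sub>v vec n z)"
    then have i: "i < n" by simp
    have "(?M *\<^sub>v vec n z) $ i = (\<Sum>j<n. ?M $$ (i, j) * z j)"
      using mult_mat_vec_sum[OF A_alpha_carrier _ i] by simp
    also have "\<dots> = lam a n q * z i"
      using A_alpha_complement_row_sum_shifted[OF i irrefl[OF i] _ shifted[OF i]] sum q by simp
    finally show "(?M *\<^sub>v vec n z) $ i = (lam a n q \<cdot>\<^sub>v vec n z) $ i" using i by simp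
  qed (use A_alpha_carrier[of a n "complement_graph H"] in simp)
  moreover have "vec n z \<noteq> 0\<^sub>v n"
  proof
    assume "vec n z = 0\<^sub>v n"
    then have "z j = 0" if "j < n" for j using that by (metis index_vec index_zero_vec(1))
    then have "(\<Sum>j<n. z j) = 0" by simp
    then show False using sum q by simp
  qed
  ultimately show ?thesis
    unfolding eigenvalue_def eigenvector_def using A_alpha_carrier[of a n "complement_graph H"]
    by (auto intro!: exI[of _ "vec n z"])
qed

lemma eigenvalue_A_alpha_complement_less:
  assumes a: "0 \<le> a" "a < 1" and q: "q \<noteq> 0" and irrefl: "\<And>i. i < n \<Longrightarrow> \<not> H i i"
    and sym: "\<And>i j. H i j \<longleftrightarrow> H j i"
    and shifted: "\<And>i. i < n \<Longrightarrow> (\<Sum>j<n. A_alpha a n H $$ (i, j) * z j) + rho a q * z i = rho a q + 2"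
    and sum: "(\<Sum>j<n. z j) < (1 + q)^2 / q" and pos: "\<And>i. i < n \<Longrightarrow> 0 < z i"
    and ev: "eigenvalue (A_alpha a n (complement_graph H)) \<mu>"
  shows "\<mu> < lam a n q"
proof (rule eigenvalue_less_if_strictly_subinvariant[OF A_alpha_carrier _ _ pos _ ev])
  fix i j assume ij: "i < n" "j < n"
  show "0 \<le> A_alpha a n (complement_graph H) $$ (i, j)"
    using ij a by (simp add: A_alpha_entry)
  show "A_alpha a n (complement_graph H) $$ (i, j) = A_alpha a n (complement_graph H) $$ (j, i)"
    using ij sym by (simp add: A_alpha_entry complement_graph_def)
next
  fix i assume i: "i < n"
  have "0 < z i" by (rule pos[OF i])
  then show "(\<Sum>j<n. A_alpha a n (complement_graph H) $$ (i, j) * z j) < lam a n q * z i"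
    using A_alpha_complement_row_sum_shifted[OF i irrefl[OF i] q shifted[OF i]] sum a
    by (simp add: mult_pos_neg)
qed

lemma path_graph_neighbours:
  assumes "i < p" "2 \<le> p"
  shows "neighbours p path_graph i = (if i = 0 then {1} else if i = p - 1 then {p - 2} else {i - 1, i + 1})"
  using assms unfolding path_graph_def by auto

lemma cycle_graph_neighbours:
  assumes "3 \<le> m" "i < m"
  shows "neighbours m (cycle_graph m) i = {if i + 1 < m then i + 1 else 0, if 0 < i then i - 1 else m - 1}"
proof -
  have succ: "(i + 1) mod m = (if i + 1 < m then i + 1 else 0)"
  proof (cases "i + 1 < m")
    case False
    then have "i + 1 = m" using assms by simp
    then show ?thesis by simp
  qed simp
  have pred: "(j + 1) mod m = i \<longleftrightarrow> j = (if 0 < i then i - 1 else m - 1)" if "j < m" for j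
  proof (cases "j + 1 < m")
    case False
    then have "j + 1 = m" using that by simp
    then show ?thesis using assms by auto
  qed (use assms in auto)
  have "cycle_graph m i j \<longleftrightarrow> j < m \<and> (j = (if i + 1 < m then i + 1 else 0) \<or> j = (if 0 < i then i - 1 else m - 1))" for j
  proof (cases "j < m")
    case True
    then show ?thesis using assms unfolding cycle_graph_def succ pred[OF True]
      by (cases "i + 1 < m"; cases "0 < i") auto
  qed (simp add: cycle_graph_def)
  moreover have "(if i + 1 < m then i + 1 else 0) < m" "(if 0 < i then i - 1 else m - 1) < m"
    using assms by auto
  ultimately show ?thesis by blast
qed

lemma card_cycle_graph_neighbours:
  assumes "3 \<le> m" "i < m"
  shows "card (neighbours m (cycle_graph m) i) = 2"
proof -
  have "(if i + 1 < m then i + 1 else 0) \<noteq> (if 0 < i then i - 1 else m - 1)"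
    using assms by auto
  then show ?thesis unfolding cycle_graph_neighbours[OF assms] by simp
qed

lemma path_cycle_union_cycle_neighbours:
  assumes "k \<le> i" "i < n"
  shows "neighbours n (path_cycle_union k n) i = (+) k ` neighbours (n - k) (cycle_graph (n - k)) (i - k)"
proof -
  have edge: "path_cycle_union k n i (k + j) \<longleftrightarrow> k + j < n \<and> cycle_graph (n - k) (i - k) j" for j
    using assms unfolding path_cycle_union_def by auto
  have "j \<in> (+) k ` neighbours (n - k) (cycle_graph (n - k)) (i - k)"
    if "j < n" "path_cycle_union k n i j" for j
  proof -
    have "k \<le> j" using that assms unfolding path_cycle_union_def by auto
    then obtain j' where "j = k + j'" using le_Suc_ex by blast
    then show ?thesis using that edge[of j'] by auto
  qed
  then show ?thesis using edge by auto
qed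

lemma path_cycle_union_path_neighbours:
  assumes "i < k" "k \<le> n"
  shows "neighbours n (path_cycle_union k n) i = neighbours k path_graph i"
  using assms unfolding path_cycle_union_def by auto

section \<open>Test vectors built on a path\<close>

text \<open>By the choice of \<open>\<rho>\<close> the sequence \<open>(-q)\<^sup>i\<close> solves the interior equations of
  \<open>(A\<^sub>\<alpha>(P\<^sub>p) + \<rho> I) z = 0\<close>; the denominator is fitted to the two end vertices.
  Off the path the vector is 1, which solves the equations at a vertex of degree 2 whose
  neighbours are off the path as well (the cycle part).\<close>

definition path_den :: "real \<Rightarrow> real \<Rightarrow> nat \<Rightarrow> real" where
  "path_den a q p = (1 - a) - a * q + (a - (1 - a) * q) * (-q)^p"

definition path_vec :: "real \<Rightarrow> real \<Rightarrow> nat \<Rightarrow> nat \<Rightarrow> real" where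
  "path_vec a q p i = (if i < p then 1 + q / path_den a q p * ((-q)^i + (-q)^(p - 1 - i)) else 1)"

lemma neg_power_recurrence:
  assumes "q \<noteq> 0"
  shows "(rho a q + 2 * a) * (-q)^(j + 1) + (1 - a) * ((-q)^j + (-q)^(j + 2)) = 0"
proof -
  have "(rho a q + 2 * a) * (-q) + (1 - a) * (1 + q^2) = 0"
    using assms unfolding rho_def by (simp add: field_simps power2_eq_square)
  moreover have "(rho a q + 2 * a) * (-q)^(j + 1) + (1 - a) * ((-q)^j + (-q)^(j + 2))
    = (-q)^j * ((rho a q + 2 * a) * (-q) + (1 - a) * (1 + q^2))"
    by (simp add: power_add power2_eq_square algebra_simps)
  ultimately show ?thesis by simp
qed

lemma path_vec_interior_equation:
  assumes "q \<noteq> 0"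
  shows "(rho a q + 2 * a) * (1 + c * ((-q)^(j + 1) + (-q)^(l + 1)))
    + (1 - a) * ((1 + c * ((-q)^j + (-q)^(l + 2))) + (1 + c * ((-q)^(j + 2) + (-q)^l))) = rho a q + 2"
proof -
  have "(rho a q + 2 * a) * (1 + c * ((-q)^(j + 1) + (-q)^(l + 1)))
      + (1 - a) * ((1 + c * ((-q)^j + (-q)^(l + 2))) + (1 + c * ((-q)^(j + 2) + (-q)^l)))
    = rho a q + 2
      + c * ((rho a q + 2 * a) * (-q)^(j + 1) + (1 - a) * ((-q)^j + (-q)^(j + 2)))
      + c * ((rho a q + 2 * a) * (-q)^(l + 1) + (1 - a) * ((-q)^l + (-q)^(l + 2)))"
    by (simp add: algebra_simps)
  then show ?thesis using neg_power_recurrence[OF assms] by simp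
qed

lemma path_vec_end_equation:
  assumes "q \<noteq> 0" "path_den a q (l + 2) \<noteq> 0"
  shows "(rho a q + a) * (1 + q / path_den a q (l + 2) * (1 + (-q)^(l + 1)))
    + (1 - a) * (1 + q / path_den a q (l + 2) * ((-q) + (-q)^l)) = rho a q + 2"
proof -
  define N where "N = path_den a q (l + 2)"
  define X where "X = (rho a q + a) * (1 + (-q)^(l + 1)) + (1 - a) * ((-q) + (-q)^l)"
  have X: "X = N / q"
    using assms(1) unfolding X_def N_def path_den_def rho_def by (simp add: field_simps power_add)
  have "(rho a q + a) * (1 + c * (1 + (-q)^(l + 1))) + (1 - a) * (1 + c * ((-q) + (-q)^l))
    = rho a q + 1 + c * X" for c
    unfolding X_def by (simp add: algebra_simps)
  from this[of "q / N"] show ?thesis using assms unfolding X N_def[symmetric] by simp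
qed

lemma path_vec_vertex_equation:
  assumes i: "i < p" and p: "2 \<le> p" and q: "q \<noteq> 0" and N: "path_den a q p \<noteq> 0"
  shows "(rho a q + a * real (card (neighbours p path_graph i))) * path_vec a q p i
    + (1 - a) * (\<Sum>j\<in>neighbours p path_graph i. path_vec a q p j) = rho a q + 2"
proof -
  obtain l where l: "p = l + 2" using p le_Suc_ex by (metis add.commute)
  have ends: "path_vec a q p 0 = 1 + q / path_den a q (l + 2) * (1 + (-q)^(l + 1))"
    "path_vec a q p (p - 1) = 1 + q / path_den a q (l + 2) * (1 + (-q)^(l + 1))"
    "path_vec a q p 1 = 1 + q / path_den a q (l + 2) * ((-q) + (-q)^l)"
    "path_vec a q p (p - 2) = 1 + q / path_den a q (l + 2) * ((-q) + (-q)^l)"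
    unfolding path_vec_def l by simp_all
  consider (first) "i = 0" | (last) "i = p - 1" | (inner) j m where "i = j + 1" "p = j + m + 3"
  proof -
    have "i = 0 \<or> i = p - 1 \<or> i = (i - 1) + 1 \<and> p = (i - 1) + (p - i - 2) + 3"
      using i by arith
    then show thesis using that by blast
  qed
  then show ?thesis
  proof cases
    case first
    then show ?thesis using path_graph_neighbours[OF i p] path_vec_end_equation[of q a l] ends N q l by simp
  next
    case last
    then show ?thesis using path_graph_neighbours[OF i p] path_vec_end_equation[of q a l] ends N q l by auto
  next
    case (inner j m)
    have "neighbours p path_graph i = {i - 1, i + 1}" "i - 1 \<noteq> i + 1"
      using path_graph_neighbours[OF i p] inner by auto
    moreover have "path_vec a q p i = 1 + q / path_den a q p * ((-q)^(j + 1) + (-q)^(m + 1))"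
      "path_vec a q p (i - 1) = 1 + q / path_den a q p * ((-q)^j + (-q)^(m + 2))"
      "path_vec a q p (i + 1) = 1 + q / path_den a q p * ((-q)^(j + 2) + (-q)^m)"
      unfolding path_vec_def using inner by simp_all
    ultimately show ?thesis
      using path_vec_interior_equation[OF q, of a "q / path_den a q p" j m] by (simp add: mult.commute)
  qed
qed

lemma A_alpha_shifted_equation_iff:
  assumes "i < n"
  shows "(\<Sum>j<n. A_alpha a n E $$ (i, j) * z j) + r * z i = r + 2 \<longleftrightarrow>
    (r + a * real (card (neighbours n E i))) * z i + (1 - a) * (\<Sum>j\<in>neighbours n E i. z j) = r + 2"
  unfolding A_alpha_row_sum[OF assms] by (simp add: algebra_simps)

lemma path_graph_shifted_equation:
  assumes "i < n" "2 \<le> n" "q \<noteq> 0" "path_den a q n \<noteq> 0"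
  shows "(\<Sum>j<n. A_alpha a n path_graph $$ (i, j) * path_vec a q n j) + rho a q * path_vec a q n i
    = rho a q + 2"
  using path_vec_vertex_equation[OF assms] A_alpha_shifted_equation_iff[OF assms(1)] by simp

lemma path_cycle_union_shifted_equation:
  assumes i: "i < n" and k: "2 \<le> k" "k + 3 \<le> n" and q: "q \<noteq> 0" and N: "path_den a q k \<noteq> 0"
  shows "(\<Sum>j<n. A_alpha a n (path_cycle_union k n) $$ (i, j) * path_vec a q k j)
    + rho a q * path_vec a q k i = rho a q + 2"
  unfolding A_alpha_shifted_equation_iff[OF i]
proof (cases "i < k")
  case True
  then show "(rho a q + a * real (card (neighbours n (path_cycle_union k n) i))) * path_vec a q k i
    + (1 - a) * (\<Sum>j\<in>neighbours n (path_cycle_union k n) i. path_vec a q k j) = rho a q + 2"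
    using path_vec_vertex_equation[OF True k(1) q N] path_cycle_union_path_neighbours[of i k n] k
    by simp
next
  case False
  define C where "C = neighbours (n - k) (cycle_graph (n - k)) (i - k)"
  have nbrs: "neighbours n (path_cycle_union k n) i = (+) k ` C"
    unfolding C_def using path_cycle_union_cycle_neighbours[of k i n] False i by simp
  have "card C = 2" unfolding C_def using card_cycle_graph_neighbours[of "n - k" "i - k"] False i k by simp
  then have "card (neighbours n (path_cycle_union k n) i) = 2"
    "(\<Sum>j\<in>neighbours n (path_cycle_union k n) i. path_vec a q k j) = 2"
    unfolding nbrs by (simp_all add: card_image sum.reindex path_vec_def)
  moreover have "path_vec a q k i = 1" using False unfolding path_vec_def by simp
  ultimately show "(rho a q + a * real (card (neighbours n (path_cycle_union k n) i))) * path_vec a q k i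
    + (1 - a) * (\<Sum>j\<in>neighbours n (path_cycle_union k n) i. path_vec a q k j) = rho a q + 2"
    by (simp add: algebra_simps)
qed

lemma sum_path_vec:
  assumes p: "p \<le> n" and q: "q \<noteq> -1"
  shows "(\<Sum>j<n. path_vec a q p j) = real n + q / path_den a q p * (2 * (1 - (-q)^p) / (1 + q))"
proof -
  have geom: "(\<Sum>j<p. (-q)^j) = (1 - (-q)^p) / (1 + q)"
    using q sum_gp_strict[of "-q" p] by simp
  have rev: "(\<Sum>j<p. (-q)^(p - 1 - j)) = (\<Sum>j<p. (-q)^j)"
    using sum.nat_diff_reindex[of "\<lambda>j. (-q)^j" p] by simp
  have split: "{..<n} = {..<p} \<union> {p..<n}" using p by auto
  have "(\<Sum>j<n. path_vec a q p j) = (\<Sum>j<p. path_vec a q p j) + (\<Sum>j\<in>{p..<n}. path_vec a q p j)"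
    unfolding split by (rule sum.union_disjoint) auto
  also have "(\<Sum>j\<in>{p..<n}. path_vec a q p j) = real n - real p"
    using p by (simp add: path_vec_def of_nat_diff)
  also have "(\<Sum>j<p. path_vec a q p j) = (\<Sum>j<p. 1 + q / path_den a q p * ((-q)^j + (-q)^(p - 1 - j)))"
    by (simp add: path_vec_def)
  also have "\<dots> = real p + q / path_den a q p * ((\<Sum>j<p. (-q)^j) + (\<Sum>j<p. (-q)^(p - 1 - j)))"
    by (simp only: sum.distrib sum_distrib_left[symmetric] sum_constant card_lessThan)
  finally show ?thesis unfolding rev geom by (simp add: algebra_simps)
qed

text \<open>The key identity is \<open>(1 - u) N(v) - (1 - v) N(u) = (1 - q) (v - u)\<close>, where
  \<open>N(u) = (1 - \<alpha>) - \<alpha> q + (\<alpha> - (1 - \<alpha>) q) u\<close> is the denominator as a function of \<open>u = (-q)\<^sup>p\<close>.\<close>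

lemma sum_path_vec_less:
  assumes q: "0 < q" "q < 1" and N: "0 < path_den a q p" "0 < path_den a q m"
    and le: "p \<le> n" "m \<le> n" and less: "(-q)^p < (-q)^m"
  shows "(\<Sum>j<n. path_vec a q m j) < (\<Sum>j<n. path_vec a q p j)"
proof -
  define u v where "u = (-q)^p" and "v = (-q)^m"
  have "(1 - u) * path_den a q m - (1 - v) * path_den a q p = (1 - q) * (v - u)"
    unfolding path_den_def u_def v_def by (simp add: algebra_simps)
  then have "(1 - v) * path_den a q p < (1 - u) * path_den a q m"
    using less q unfolding u_def[symmetric] v_def[symmetric] by (smt (verit) mult_pos_pos)
  then have "(1 - v) / path_den a q m < (1 - u) / path_den a q p"
    using N by (simp add: divide_less_eq less_divide_eq mult.commute)
  then have "q * (2 / (1 + q)) * ((1 - v) / path_den a q m) < q * (2 / (1 + q)) * ((1 - u) / path_den a q p)"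
    using q by (intro mult_strict_left_mono) auto
  then show ?thesis
    using sum_path_vec[OF le(1), of q a] sum_path_vec[OF le(2), of q a] q
    unfolding u_def v_def by (simp add: field_simps)
qed

lemma path_vec_pos:
  assumes q: "0 < q" "q < 1" and N: "0 < path_den a q p"
    and p: "p \<noteq> 3" "p \<le> 2 \<or> q^2 * (1 + q) < path_den a q p"
  shows "0 < path_vec a q p i"
proof (cases "i < p")
  case False
  then show ?thesis unfolding path_vec_def by simp
next
  case True
  define w where "w = (-q)^i + (-q)^(p - 1 - i)"
  have z: "path_vec a q p i = 1 + q / path_den a q p * w" unfolding path_vec_def w_def using True by simp
  have lower: "- (q^e) \<le> (-q)^e" for e
    using abs_ge_minus_self[of "(-q)^e"] q by (simp add: power_abs)
  have pow_le: "q^e \<le> q^d" if "d \<le> e" for d e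
    using that q by (intro power_decreasing) auto
  show ?thesis
  proof (cases "0 \<le> w")
    case True
    then have "0 \<le> q / path_den a q p * w" using q N by simp
    then show ?thesis unfolding z by linarith
  next
    case False
    have "0 \<le> 1 + (-q)^e" for e
      using lower[of e] power_le_one[of q e] q by simp
    then have "i \<noteq> 0 \<and> p - 1 - i \<noteq> 0"
      using False unfolding w_def by (cases "i = 0"; cases "p - 1 - i = 0") (auto simp: add.commute)
    then have ends: "1 \<le> i" "1 \<le> p - 1 - i" by auto
    then have "4 \<le> p" using p(1) True by arith
    then have big: "q^2 * (1 + q) < path_den a q p" using p(2) by simp
    consider "2 \<le> i" | "2 \<le> p - 1 - i" using True \<open>4 \<le> p\<close> by arith
    then have "q^i + q^(p - 1 - i) \<le> q + q^2"
    proof cases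
      case 1
      then show ?thesis using pow_le[OF 1] pow_le[OF ends(2)] by simp
    next
      case 2
      then show ?thesis using pow_le[OF 2] pow_le[OF ends(1)] by simp
    qed
    then have "w \<ge> -(q + q^2)" using lower[of i] lower[of "p - 1 - i"] unfolding w_def by linarith
    then have "q / path_den a q p * w \<ge> q / path_den a q p * (-(q + q^2))"
      using q N by (intro mult_left_mono) auto
    moreover have "q / path_den a q p * (q + q^2) < 1"
      using big q N by (simp add: divide_less_eq power2_eq_square algebra_simps)
    ultimately show ?thesis unfolding z by linarith
  qed
qed

section \<open>Choice of the parameter q\<close>

text \<open>For a balancing parameter the test vector \<open>path_vec a q p\<close> on \<open>n\<close> vertices has
  sum exactly \<open>(1 + q)\<^sup>2 / q\<close> (\<open>sum_path_vec_balancing\<close>), so it is an eigenvector of the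
  complement.\<close>

definition balancing :: "real \<Rightarrow> nat \<Rightarrow> nat \<Rightarrow> real \<Rightarrow> bool" where
  "balancing a n p q \<longleftrightarrow> 0 < q \<and> q < 1/2 \<and> 0 < (1 + q)^2 - real n * q \<and>
     path_den a q p = 2 * q^2 * (1 - (-q)^p) / ((1 + q) * ((1 + q)^2 - real n * q))"

lemma smaller_root_below_half:
  assumes "5 \<le> n"
  obtains r :: real where "0 < r" "r < 1/2" "(1 + r)^2 = real n * r"
    "\<And>q. 0 \<le> q \<Longrightarrow> q < r \<Longrightarrow> 0 < (1 + q)^2 - real n * q"
proof -
  define D where "D q = (1 + q)^2 - real n * q" for q :: real
  have "continuous_on {0..1/2} D" unfolding D_def by (intro continuous_intros)
  moreover have "D (1/2) < 0" using assms unfolding D_def by (simp add: power2_eq_square)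
  ultimately obtain r where r: "0 \<le> r" "r \<le> 1/2" "D r = 0"
    using IVT2'[of D "1/2" 0 0] unfolding D_def by force
  have "r \<noteq> 0" using r unfolding D_def by auto
  moreover have "r \<noteq> 1/2" using r(3) \<open>D (1/2) < 0\<close> by (metis less_irrefl)
  ultimately have r': "0 < r" "r < 1/2" using r by auto
  have "0 < D q" if "0 \<le> q" "q < r" for q
  proof -
    have "D q - D r = (q - r) * (q + r + 2 - real n)" unfolding D_def by (simp add: power2_eq_square algebra_simps)
    moreover have "0 < (q - r) * (q + r + 2 - real n)" using that r' assms by (intro mult_neg_neg) auto
    ultimately show ?thesis using r(3) by simp
  qed
  then show ?thesis using that r' r(3) unfolding D_def by simp
qed

text \<open>Between 0 and the smaller root r of \<open>(1 + q)\<^sup>2 = n q\<close> the balancing equation, cleared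
  of denominators, changes sign.\<close>

lemma balancing_exists:
  assumes a: "0 \<le> a" "a < 1" and p: "1 \<le> p" and n: "5 \<le> n"
  shows "\<exists>q. balancing a n p q"
proof -
  obtain r where r: "0 < r" "r < 1/2" "(1 + r)^2 = real n * r"
    and D: "\<And>q. 0 \<le> q \<Longrightarrow> q < r \<Longrightarrow> 0 < (1 + q)^2 - real n * q"
    using smaller_root_below_half[OF n] by blast
  define P where "P q = 2 * q^2 * (1 - (-q)^p) - (1 + q) * ((1 + q)^2 - real n * q) * path_den a q p"
    for q :: real
  have "P 0 < 0" using a p unfolding P_def path_den_def by (simp add: power_0_left)
  moreover have "0 < P r"
  proof -
    have "\<bar>(-r)^p\<bar> < 1" using r p by (simp add: power_abs power_less_one_iff)
    then have "0 < 1 - (-r)^p" by linarith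
    then show ?thesis using r unfolding P_def by simp
  qed
  moreover have "continuous_on {0..r} P" unfolding P_def path_den_def by (intro continuous_intros)
  ultimately obtain q where q: "0 \<le> q" "q \<le> r" "P q = 0"
    using IVT'[of P 0 0 r] r by force
  have "q \<noteq> 0" "q \<noteq> r" using q \<open>P 0 < 0\<close> \<open>0 < P r\<close> by auto
  with q have q': "0 < q" "q < r" by auto
  define Dq where "Dq = (1 + q)^2 - real n * q"
  have "0 < Dq" unfolding Dq_def using D q' by simp
  have "path_den a q p = (1 + q) * Dq * path_den a q p / ((1 + q) * Dq)"
    using q' \<open>0 < Dq\<close> by simp
  also have "(1 + q) * Dq * path_den a q p = 2 * q^2 * (1 - (-q)^p)"
    using q(3) unfolding P_def Dq_def by simp
  finally show ?thesis unfolding balancing_def using q' r \<open>0 < Dq\<close> unfolding Dq_def by auto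
qed

lemma balancing_path_den_ge:
  assumes "balancing a n p q" "5 \<le> n"
  shows "2 * q^2 * (1 - (-q)^p) \<le> path_den a q p"
proof -
  define Y where "Y = (1 + q) * ((1 + q)^2 - real n * q)"
  have q: "0 < q" "q < 1/2" and Y: "0 < Y" and den: "path_den a q p = 2 * q^2 * (1 - (-q)^p) / Y"
    using assms(1) unfolding balancing_def Y_def by auto
  have "Y \<le> (1 + q) * ((1 + q)^2 - 5 * q)"
    unfolding Y_def using assms(2) q by (intro mult_left_mono) auto
  also have "\<dots> = 1 - 2 * q - 2 * q^2 + q^3"
    by (simp add: power2_eq_square power3_eq_cube algebra_simps)
  also have "\<dots> \<le> 1"
  proof -
    have "q^3 \<le> q^2" using q by (intro power_decreasing) auto
    moreover have "0 \<le> q^2" by simp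
    ultimately show ?thesis using q by linarith
  qed
  finally have "Y \<le> 1" .
  have "\<bar>(-q)^p\<bar> \<le> 1" using q by (simp add: power_abs power_le_one)
  then have "0 \<le> 1 - (-q)^p" by (metis abs_le_D1 diff_ge_0_iff_ge)
  then have "0 \<le> 2 * q^2 * (1 - (-q)^p)" by simp
  then show ?thesis unfolding den using Y \<open>Y \<le> 1\<close> by (simp add: le_divide_eq mult_left_le)
qed

lemma sum_path_vec_balancing:
  assumes "balancing a n p q" "1 \<le> p" "p \<le> n"
  shows "0 < path_den a q p" "(\<Sum>j<n. path_vec a q p j) = (1 + q)^2 / q"
proof -
  define D where "D = (1 + q)^2 - real n * q"
  define U where "U = 1 - (-q)^p"
  have q: "0 < q" "q < 1/2" and D: "0 < D" and den: "path_den a q p = 2 * q^2 * U / ((1 + q) * D)"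
    using assms(1) unfolding balancing_def D_def U_def by auto
  have "\<bar>(-q)^p\<bar> < 1" using q assms(2) by (simp add: power_abs power_less_one_iff)
  then have U: "0 < U" unfolding U_def by linarith
  show "0 < path_den a q p" unfolding den using q U D by simp
  have "(\<Sum>j<n. path_vec a q p j) = real n + q / path_den a q p * (2 * U / (1 + q))"
    using sum_path_vec[OF assms(3), of q a] q unfolding U_def by simp
  also have "q / path_den a q p = (1 + q) * D / (2 * q * U)"
    unfolding den using q U D by (simp add: field_simps power2_eq_square)
  also have "(1 + q) * D / (2 * q * U) * (2 * U / (1 + q)) = D / q"
  proof -
    have "t * D / (2 * q * U) * (2 * U / t) = D / q" if "t \<noteq> 0" for t
      using q U that by (simp add: field_simps)
    then show ?thesis using q by simp
  qed
  also have "real n + D / q = (1 + q)^2 / q"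
    unfolding D_def using q by (simp add: field_simps)
  finally show "(\<Sum>j<n. path_vec a q p j) = (1 + q)^2 / q" .
qed

lemma path_den_diff_le:
  assumes "0 \<le> a" "a < 1" "0 < q" "q < 1"
  shows "\<bar>path_den a q m - path_den a q p\<bar> \<le> \<bar>(-q)^m - (-q)^p\<bar>"
proof -
  have "0 \<le> (1 - a) * q" "(1 - a) * q \<le> 1"
    using assms by (auto intro: mult_le_one)
  then have "\<bar>a - (1 - a) * q\<bar> \<le> 1" using assms by linarith
  moreover have "path_den a q m - path_den a q p = (a - (1 - a) * q) * ((-q)^m - (-q)^p)"
    unfolding path_den_def by (simp add: algebra_simps)
  ultimately show ?thesis by (simp add: abs_mult mult_left_le_one_le)
qed

lemma power_add_le:
  fixes q c :: real
  assumes "0 \<le> q" "q \<le> c"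
  shows "q^(j + d) \<le> q^j * c^d"
  unfolding power_add using assms by (intro mult_left_mono power_mono) auto

text \<open>The balancing equation puts \<open>path_den a q p\<close> close to \<open>2 q\<^sup>2\<close>, and changing the
  exponent p moves it by at most \<open>|(-q)\<^sup>m - (-q)\<^sup>p|\<close>.\<close>

lemma balancing_even_bounds:
  assumes bal: "balancing a n n q" and a: "0 \<le> a" "a < 1"
    and k: "even k" "2 \<le> k" "k + 3 \<le> n"
  shows "0 < path_den a q k" "k \<le> 2 \<or> q^2 * (1 + q) < path_den a q k" "(-q)^n < (-q)^k"
proof -
  have q: "0 < q" "q < 1/2" using bal unfolding balancing_def by auto
  have q2: "0 < q^2" using q by simp
  have "q^(2 + 1) \<le> q^2 * (1/2)^1" "q^(2 + 2) \<le> q^2 * (1/2)^2" "q^(2 + 3) \<le> q^2 * (1/2)^3"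
    "q^(2 + 5) \<le> q^2 * (1/2)^5"
    using q by (intro power_add_le; simp)+
  then have small: "q^3 \<le> q^2 / 2" "q^4 \<le> q^2 / 4" "q^5 \<le> q^2 / 8" "q^7 \<le> q^2 / 32"
    by (simp_all add: power_divide)
  have uk: "(-q)^k = q^k" using k by (simp add: power_minus_even)
  have abs_un: "\<bar>(-q)^n\<bar> = q^n" using q by (simp add: power_abs)
  moreover have "q^n \<le> q^5" using q k by (intro power_decreasing) auto
  ultimately have un: "-(q^5) \<le> (-q)^n" "(-q)^n \<le> q^5" by linarith+
  have "2 * q^2 * (1 - q^5) \<le> 2 * q^2 * (1 - (-q)^n)"
    using un q2 by (intro mult_left_mono) auto
  then have Nn: "2 * q^2 - 2 * q^7 \<le> path_den a q n"
    using balancing_path_den_ge[OF bal] k by (simp add: algebra_simps flip: power_add)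
  have "\<bar>path_den a q k - path_den a q n\<bar> \<le> \<bar>(-q)^k - (-q)^n\<bar>"
    using path_den_diff_le a q by simp
  also have "\<dots> \<le> q^k + q^5"
  proof -
    have "0 \<le> q^k" using q by simp
    then show ?thesis unfolding uk abs_le_iff using un by linarith
  qed
  finally have Nk: "2 * q^2 - 2 * q^7 - q^k - q^5 \<le> path_den a q k"
    using Nn by (simp add: abs_le_iff)
  show "k \<le> 2 \<or> q^2 * (1 + q) < path_den a q k"
  proof (cases "k \<le> 2")
    case False
    then have "4 \<le> k" using k(1) by presburger
    then have "q^k \<le> q^4" using q by (intro power_decreasing) auto
    then show ?thesis using Nk small q2 by (simp add: algebra_simps power2_eq_square power3_eq_cube)
  qed simp
  have "q^k \<le> q^2" using q k by (intro power_decreasing) auto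
  then show "0 < path_den a q k" using Nk small q2 by linarith
  have "q^n < q^k" using q k by (intro power_strict_decreasing) auto
  then show "(-q)^n < (-q)^k" using abs_un abs_ge_self[of "(-q)^n"] unfolding uk by linarith
qed

lemma balancing_odd_bounds:
  assumes bal: "balancing a n k q" and a: "0 \<le> a" "a < 1"
    and k: "odd k" "2 \<le> k" "k + 3 \<le> n"
  shows "q^2 * (1 + q) < path_den a q n" "(-q)^k < (-q)^n"
proof -
  have q: "0 < q" "q < 1/2" and D: "0 < (1 + q)^2 - real n * q"
    using bal unfolding balancing_def by auto
  have k3: "3 \<le> k" using k by presburger
  have q2: "0 < q^2" using q by simp
  have "q < 3/10"
  proof (rule ccontr)
    assume "\<not> q < 3/10"
    moreover have "q^2 \<le> q / 2" using q by (simp add: power2_eq_square mult_left_le_one_le)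
    moreover have "6 * q \<le> real n * q" using k3 k q by (intro mult_right_mono) auto
    moreover have "(1 + q)^2 = 1 + 2 * q + q^2" by (simp add: power2_eq_square algebra_simps)
    ultimately have "(1 + q)^2 - real n * q \<le> 0" by linarith
    then show False using D by simp
  qed
  have "q^(2 + 1) \<le> q^2 * (3/10)^1" "q^(2 + 4) \<le> q^2 * (3/10)^4"
    using q \<open>q < 3/10\<close> by (intro power_add_le; simp)+
  then have small: "q^3 \<le> q^2 * (3/10)" "q^6 \<le> q^2 * (81/10000)"
    by (simp_all add: power_divide)
  have uk: "(-q)^k = -(q^k)" using k by (simp add: power_minus_odd)
  have qk: "0 \<le> q^k" "q^k \<le> q^3" using q k3 by (auto intro: power_decreasing)
  have "2 * q^2 \<le> 2 * q^2 * (1 - (-q)^k)"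
    using qk q2 unfolding uk by simp
  then have Nk: "2 * q^2 \<le> path_den a q k"
    using balancing_path_den_ge[OF bal] k by simp
  have abs_un: "\<bar>(-q)^n\<bar> = q^n" using q by (simp add: power_abs)
  moreover have "q^n \<le> q^6" using q k3 k by (intro power_decreasing) auto
  ultimately have un: "-(q^6) \<le> (-q)^n" "(-q)^n \<le> q^6" by linarith+
  have "\<bar>path_den a q n - path_den a q k\<bar> \<le> \<bar>(-q)^n - (-q)^k\<bar>"
    using path_den_diff_le a q by simp
  also have "\<dots> \<le> q^6 + q^3"
    unfolding uk abs_le_iff using un qk by linarith
  finally have "2 * q^2 - q^6 - q^3 \<le> path_den a q n"
    using Nk by (simp add: abs_le_iff)
  then show "q^2 * (1 + q) < path_den a q n"
    using small q2 by (simp add: algebra_simps power2_eq_square power3_eq_cube)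
  have "q^n < q^k" using q k by (intro power_strict_decreasing) auto
  then show "(-q)^k < (-q)^n" using abs_un abs_ge_minus_self[of "(-q)^n"] unfolding uk by linarith
qed

lemma eigenvalue_complement_path_graph:
  assumes "balancing a n n q" "2 \<le> n"
  shows "eigenvalue (A_alpha a n (complement_graph path_graph)) (lam a n q)"
proof -
  have q: "0 < q" using assms(1) unfolding balancing_def by simp
  note balanced = sum_path_vec_balancing[OF assms(1)]
  show ?thesis
    using balanced assms(2) q path_graph_shifted_equation[of _ n q a]
    by (intro eigenvalue_A_alpha_complement[where z = "path_vec a q n"]) (auto simp: path_graph_def)
qed

lemma eigenvalue_complement_path_cycle_union:
  assumes "balancing a n k q" "2 \<le> k" "k + 3 \<le> n"
  shows "eigenvalue (A_alpha a n (complement_graph (path_cycle_union k n))) (lam a n q)"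
proof -
  have q: "0 < q" using assms(1) unfolding balancing_def by simp
  note balanced = sum_path_vec_balancing[OF assms(1)]
  show ?thesis
    using balanced assms(2,3) q path_cycle_union_shifted_equation[of _ n k q a]
    by (intro eigenvalue_A_alpha_complement[where z = "path_vec a q k"])
      (auto simp: path_cycle_union_def path_graph_def cycle_graph_def)
qed

lemma eigenvalue_complement_path_cycle_union_less_even:
  assumes bal: "balancing a n n q" and a: "0 \<le> a" "a < 1"
    and k: "even k" "2 \<le> k" "k + 3 \<le> n"
    and ev: "eigenvalue (A_alpha a n (complement_graph (path_cycle_union k n))) \<mu>"
  shows "\<mu> < lam a n q"
proof -
  have q: "0 < q" "q < 1" using bal unfolding balancing_def by auto
  note bounds = balancing_even_bounds[OF bal a k]
  note Nn = sum_path_vec_balancing[OF bal, simplified]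
  have "(\<Sum>j<n. path_vec a q k j) < (1 + q)^2 / q"
    using sum_path_vec_less[OF q Nn(1) bounds(1) order.refl _ bounds(3)] Nn k by simp
  moreover have "0 < path_vec a q k i" for i
  proof -
    have "k \<noteq> 3" using k(1) by presburger
    then show ?thesis by (rule path_vec_pos[OF q bounds(1) _ bounds(2)])
  qed
  ultimately show ?thesis
    using path_cycle_union_shifted_equation[of _ n k q a] q a k ev bounds(1)
    by (intro eigenvalue_A_alpha_complement_less[where z = "path_vec a q k"])
      (auto simp: path_cycle_union_def path_graph_def cycle_graph_def)
qed

lemma eigenvalue_complement_path_graph_less_odd:
  assumes bal: "balancing a n k q" and a: "0 \<le> a" "a < 1"
    and k: "odd k" "2 \<le> k" "k + 3 \<le> n"
    and ev: "eigenvalue (A_alpha a n (complement_graph path_graph)) \<mu>"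
  shows "\<mu> < lam a n q"
proof -
  have q: "0 < q" "q < 1" using bal unfolding balancing_def by auto
  note bounds = balancing_odd_bounds[OF bal a k]
  have "0 < q^2 * (1 + q)" using q by simp
  then have Nn: "0 < path_den a q n" using bounds(1) by linarith
  note Nk = sum_path_vec_balancing[OF bal]
  have "(\<Sum>j<n. path_vec a q n j) < (1 + q)^2 / q"
    using sum_path_vec_less[OF q Nk(1) Nn _ order.refl bounds(2)] Nk k by simp
  moreover have "0 < path_vec a q n i" for i
    using path_vec_pos[OF q Nn] bounds(1) k by simp
  ultimately show ?thesis
    using path_graph_shifted_equation[of _ n q a] q a k ev Nn
    by (intro eigenvalue_A_alpha_complement_less[where z = "path_vec a q n"]) (auto simp: path_graph_def)
qed

theorem lemma2p4:
  fixes \<alpha> :: real and n k :: nat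
  assumes "0 \<le> \<alpha>" "\<alpha> < 1" "2 \<le> k" "k + 3 \<le> n"
  shows "(even k \<longrightarrow>
            lambda1 (A_alpha \<alpha> n (complement_graph path_graph))
            > lambda1 (A_alpha \<alpha> n (complement_graph (path_cycle_union k n))))
       \<and> (odd k \<longrightarrow>
            lambda1 (A_alpha \<alpha> n (complement_graph path_graph))
            < lambda1 (A_alpha \<alpha> n (complement_graph (path_cycle_union k n))))"
proof -
  let ?P = "A_alpha \<alpha> n (complement_graph path_graph)"
  let ?G = "A_alpha \<alpha> n (complement_graph (path_cycle_union k n))"
  have n: "5 \<le> n" using assms by simp
  obtain q1 where q1: "balancing \<alpha> n n q1" using balancing_exists[OF assms(1,2) _ n, of n] n by auto
  obtain q2 where q2: "balancing \<alpha> n k q2" using balancing_exists[OF assms(1,2) _ n, of k] assms(3) by auto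
  have P: "eigenvalue ?P (lam \<alpha> n q1)" using eigenvalue_complement_path_graph[OF q1] n by simp
  have G: "eigenvalue ?G (lam \<alpha> n q2)" by (rule eigenvalue_complement_path_cycle_union[OF q2 assms(3,4)])
  show ?thesis
  proof (intro conjI impI)
    assume "even k"
    then have "lambda1 ?G < lam \<alpha> n q1"
      using eigenvalue_complement_path_cycle_union_less_even[OF q1 assms(1,2) _ assms(3,4)]
      by (intro lambda1_less[OF A_alpha_carrier G])
    then show "lambda1 ?G < lambda1 ?P" using eigenvalue_le_lambda1[OF A_alpha_carrier P] by simp
  next
    assume "odd k"
    then have "lambda1 ?P < lam \<alpha> n q2"
      using eigenvalue_complement_path_graph_less_odd[OF q2 assms(1,2) _ assms(3,4)]
      by (intro lambda1_less[OF A_alpha_carrier P])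
    then show "lambda1 ?P < lambda1 ?G" using eigenvalue_le_lambda1[OF A_alpha_carrier G] by simp
  qed
qed

end
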